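(* Let $\varepsilon>0$, $\Omega\subset\mathbb{R}^2$ bounded open, $u\in\mathcal{SF}_\varepsilon(\Omega)$ and $R\in\mathcal{R}_\varepsilon(u)$, and assume $u(\mathcal{L}_\varepsilon(R))$ contains four points. If $i,j\in\mathcal{L}_\varepsilon$ are such that $[i,j]\subset R$ is an edge of $\mathcal{E}_\varepsilon$ and $u(i)\notin\{u(j),-u(j)\}$, then $[i,j]$ is a boundary edge of $R$.
   Context: $\mathcal{L}=\{ae_1+b\hat e_2:a,b\in\mathbb{Z}\}$ with $e_1=(1,0)$, $\hat e_2=\frac12(1,\sqrt3)$, $\mathcal{L}_\varepsilon=\varepsilon\mathcal{L}$, $\mathcal{L}_\varepsilon(R)=\mathcal{L}_\varepsilon\cap R$; $\mathcal{T}_\varepsilon$ is the set of closed triangles with vertices in $\mathcal{L}_\varepsilon$ pairwise at distance $\varepsilon$; $\mathcal{E}_\varepsilon$ the set of segments $[i,j]$, $i,j\in\mathcal{L}_\varepsilon$, $|i-j|=\varepsilon$. $n=(0,0,1)$; $\mathcal{SF}_\varepsilon(\Omega)$ is the set of $u:\mathcal{L}_\varepsilon\to\mathbb{S}^2$ with $u=n$ on $\mathcal{L}_\varepsilon\setminus\Omega$. $\mathcal{N}_\varepsilon(u)=\{[i,j]\in\mathcal{E}_\varepsilon:u(i)=-u(j)\}$, $\mathcal{C}_\varepsilon(u)=\mathcal{E}_\varepsilon\setminus\mathcal{N}_\varepsilon(u)$. Two triangles of $\mathcal{T}_\varepsilon$ are neighbours if their intersection is an edge in $\mathcal{N}_\varepsilon(u)$,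 and connected if joined by a finite chain of consecutive neighbours. $\mathcal{R}_\varepsilon(u)$ is the set of admissible interpolation regions: unions of pairwise connected triangles of $\mathcal{T}_\varepsilon$ that are maximal with respect to inclusion. A boundary edge of $R$ is an edge $[i,j]\in\mathcal{C}_\varepsilon(u)$ which is the common edge of a triangle $T\subseteq R$ and a triangle $T'\in\mathcal{T}_\varepsilon$ with $T'\subseteq\mathbb{R}^2\setminus\mathrm{int}(R)$. *)

theory Defs
  imports "HOL-Analysis.Analysis"
begin

type_synonym pt = "real \<times> real"
type_synonym spin = "real \<times> real \<times> real"

definition e1 :: pt where "e1 = (1, 0)"
definition e2hat :: pt where "e2hat = (1/2, sqrt 3 / 2)"

definition lattice :: "real \<Rightarrow> pt set" where
  "lattice eps = {eps *\<^sub>R (of_int a *\<^sub>R e1 + of_int b *\<^sub>R e2hat) | a b :: int. True}"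

definition npole :: spin where "npole = (0, 0, 1)"

definition triangles :: "real \<Rightarrow> pt set set" where
  "triangles eps = {convex hull {a, b, c} | a b c.
      a \<in> lattice eps \<and> b \<in> lattice eps \<and> c \<in> lattice eps \<and>
      dist a b = eps \<and> dist b c = eps \<and> dist a c = eps}"

definition edges :: "real \<Rightarrow> pt set set" where
  "edges eps = {closed_segment i j | i j. i \<in> lattice eps \<and> j \<in> lattice eps \<and> dist i j = eps}"

text \<open>Spin fields: u : L_eps \<rightarrow> S^2, u = n on L_eps outside Omega (values off the lattice irrelevant).\<close>
definition SF :: "real \<Rightarrow> pt set \<Rightarrow> (pt \<Rightarrow> spin) set" where
  "SF eps \<Omega> = {u. (\<forall>i \<in> lattice eps. u i \<in> sphere 0 1) \<and>
                    (\<forall>i \<in> lattice eps - \<Omega>. u i = npole)}"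

definition Nedges :: "real \<Rightarrow> (pt \<Rightarrow> spin) \<Rightarrow> pt set set" where
  "Nedges eps u = {closed_segment i j | i j. i \<in> lattice eps \<and> j \<in> lattice eps \<and>
                     dist i j = eps \<and> u i = - u j}"

definition Cedges :: "real \<Rightarrow> (pt \<Rightarrow> spin) \<Rightarrow> pt set set" where
  "Cedges eps u = edges eps - Nedges eps u"

definition neighbours :: "real \<Rightarrow> (pt \<Rightarrow> spin) \<Rightarrow> pt set \<Rightarrow> pt set \<Rightarrow> bool" where
  "neighbours eps u T T' \<longleftrightarrow> T \<in> triangles eps \<and> T' \<in> triangles eps \<and>
     T \<inter> T' \<in> Nedges eps u"

definition tri_connected :: "real \<Rightarrow> (pt \<Rightarrow> spin) \<Rightarrow> pt set \<Rightarrow> pt set \<Rightarrow> bool" where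
  "tri_connected eps u T T' \<longleftrightarrow> T \<in> triangles eps \<and> T' \<in> triangles eps \<and>
     (neighbours eps u)\<^sup>*\<^sup>* T T'"

definition pw_connected_union :: "real \<Rightarrow> (pt \<Rightarrow> spin) \<Rightarrow> pt set \<Rightarrow> bool" where
  "pw_connected_union eps u R \<longleftrightarrow> (\<exists>S. S \<subseteq> triangles eps \<and>
      (\<forall>T\<in>S. \<forall>T'\<in>S. tri_connected eps u T T') \<and> R = \<Union>S)"

definition regions :: "real \<Rightarrow> (pt \<Rightarrow> spin) \<Rightarrow> pt set set" where
  "regions eps u = {R. pw_connected_union eps u R \<and>
      (\<forall>R'. pw_connected_union eps u R' \<and> R \<subseteq> R' \<longrightarrow> R' = R)}"

definition boundary_edge :: "real \<Rightarrow> (pt \<Rightarrow> spin) \<Rightarrow> pt set \<Rightarrow> pt set \<Rightarrow> bool" where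
  "boundary_edge eps u R E \<longleftrightarrow> E \<in> Cedges eps u \<and>
     (\<exists>T T'. T \<in> triangles eps \<and> T' \<in> triangles eps \<and> T \<subseteq> R \<and>
        T' \<subseteq> UNIV - interior R \<and> T \<inter> T' = E)"

end

theory Submission
  imports Defs "HOL-Library.Transitive_Closure_Table"
begin

(* A triangle has at most two edges whose endpoints carry antipodal spins (three would force
   u z = - u z at a vertex z), so the neighbour graph of the triangles has maximal degree two, and a
   triangle with a vertex outside every antipodal pair has at most one neighbour. Along a chain of
   neighbours the set of spin values occurring in antipodal pairs does not change.

   If both triangles T and T' at the edge [i,j] belonged to R, each would have at most one neighbour,
   because u i is neither u j nor - u j. A connected graph of maximal degree two has at most two such
   vertices, so every other triangle of R has only paired vertices, and on R the field u would take only
   the three values at the vertices of T. Hence T' is not part of R; as every point of T' is a limit of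
   points lying in no other triangle, T' does not meet the interior of R. *)

section \<open>Oblique lattice coordinates\<close>

definition pt_at :: "real \<Rightarrow> real \<Rightarrow> real \<Rightarrow> pt" where
  "pt_at eps s t = eps *\<^sub>R (s *\<^sub>R e1 + t *\<^sub>R e2hat)"

definition lat_pt :: "real \<Rightarrow> int \<Rightarrow> int \<Rightarrow> pt" where
  "lat_pt eps a b = pt_at eps (of_int a) (of_int b)"

definition coord1 :: "real \<Rightarrow> pt \<Rightarrow> real" where
  "coord1 eps x = fst x / eps - snd x / (eps * sqrt 3)"

definition coord2 :: "real \<Rightarrow> pt \<Rightarrow> real" where
  "coord2 eps x = 2 * snd x / (eps * sqrt 3)"

lemma pt_at_eq: "pt_at eps s t = (eps * (s + t / 2), eps * t * sqrt 3 / 2)"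
  by (simp add: pt_at_def e1_def e2hat_def algebra_simps)

lemma coords_pt_at [simp]:
  assumes "eps \<noteq> 0"
  shows "coord1 eps (pt_at eps s t) = s" "coord2 eps (pt_at eps s t) = t"
  using assms by (simp_all add: pt_at_eq coord1_def coord2_def field_simps)

lemma pt_at_coords [simp]: "eps \<noteq> 0 \<Longrightarrow> pt_at eps (coord1 eps x) (coord2 eps x) = x"
  by (cases x) (simp add: pt_at_eq coord1_def coord2_def field_simps)

lemma coords_eq_iff: "eps \<noteq> 0 \<Longrightarrow> x = y \<longleftrightarrow> coord1 eps x = coord1 eps y \<and> coord2 eps x = coord2 eps y"
  by (metis pt_at_coords)

lemma coords_linear [simp]:
  "coord1 eps (x + y) = coord1 eps x + coord1 eps y"
  "coord2 eps (x + y) = coord2 eps x + coord2 eps y"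
  "coord1 eps (x - y) = coord1 eps x - coord1 eps y"
  "coord2 eps (x - y) = coord2 eps x - coord2 eps y"
  "coord1 eps (c *\<^sub>R x) = c * coord1 eps x"
  "coord2 eps (c *\<^sub>R x) = c * coord2 eps x"
  by (simp_all add: coord1_def coord2_def algebra_simps add_divide_distrib diff_divide_distrib)

lemma coords_lat_pt [simp]:
  assumes "eps \<noteq> 0"
  shows "coord1 eps (lat_pt eps a b) = of_int a" "coord2 eps (lat_pt eps a b) = of_int b"
  using assms by (simp_all add: lat_pt_def)

lemma lattice_iff: "x \<in> lattice eps \<longleftrightarrow> (\<exists>a b. x = lat_pt eps a b)"
  by (simp add: lattice_def lat_pt_def pt_at_def)

lemma lat_pt_in_lattice [simp]: "lat_pt eps a b \<in> lattice eps"
  by (auto simp: lattice_iff)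

lemma norm_pt_at: "norm (pt_at eps s t) = \<bar>eps\<bar> * sqrt (s\<^sup>2 + s * t + t\<^sup>2)"
proof -
  have "(eps * (s + t / 2))\<^sup>2 + (eps * t * sqrt 3 / 2)\<^sup>2 = eps\<^sup>2 * (s\<^sup>2 + s * t + t\<^sup>2)"
    by (simp add: power2_eq_square algebra_simps)
  then show ?thesis
    by (simp add: pt_at_eq norm_Pair power_divide real_sqrt_mult)
qed

lemma pt_at_diff: "pt_at eps s t - pt_at eps s' t' = pt_at eps (s - s') (t - t')"
  by (simp add: pt_at_def algebra_simps)

lemma dist_pt_at: "dist (pt_at eps s t) (pt_at eps s' t') = \<bar>eps\<bar> * sqrt ((s - s')\<^sup>2 + (s - s') * (t - t') + (t - t')\<^sup>2)"
  by (simp add: dist_norm pt_at_diff norm_pt_at)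

lemma dist_lat_pt:
  "dist (lat_pt eps a b) (lat_pt eps c d) = \<bar>eps\<bar> * sqrt (of_int ((a - c)\<^sup>2 + (a - c) * (b - d) + (b - d)\<^sup>2))"
  by (simp add: lat_pt_def dist_pt_at)

definition hex_dirs :: "(int \<times> int) set" where
  "hex_dirs = {(1, 0), (0, 1), (-1, 1), (-1, 0), (0, -1), (1, -1)}"

lemma unit_form_iff_hex_dirs: "(x::int)\<^sup>2 + x * y + y\<^sup>2 = 1 \<longleftrightarrow> (x, y) \<in> hex_dirs"
proof
  assume form: "x\<^sup>2 + x * y + y\<^sup>2 = 1"
  have "(2 * x + y)\<^sup>2 + 3 * y\<^sup>2 = 4" "(2 * y + x)\<^sup>2 + 3 * x\<^sup>2 = 4"
    using form by (simp_all add: power2_eq_square algebra_simps)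
  moreover have "(2 * x + y)\<^sup>2 \<ge> 0" "(2 * y + x)\<^sup>2 \<ge> 0"
    by simp_all
  ultimately have "3 * x\<^sup>2 \<le> 4" "3 * y\<^sup>2 \<le> 4"
    by linarith+
  then have "x\<^sup>2 \<le> 1" "y\<^sup>2 \<le> 1"
    by presburger+
  then have "x \<in> {-1, 0, 1}" "y \<in> {-1, 0, 1}"
    using abs_le_square_iff[of x 1] abs_le_square_iff[of y 1] by auto
  with form show "(x, y) \<in> hex_dirs"
    by (auto simp: hex_dirs_def)
qed (auto simp: hex_dirs_def)

lemma dist_lat_pt_eq_iff:
  assumes "eps > 0"
  shows "dist (lat_pt eps a b) (lat_pt eps c d) = eps \<longleftrightarrow> (c - a, d - b) \<in> hex_dirs"
proof -
  let ?F = "(c - a)\<^sup>2 + (c - a) * (d - b) + (d - b)\<^sup>2"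
  have "dist (lat_pt eps a b) (lat_pt eps c d) = eps * sqrt (of_int ?F)"
    using assms by (simp add: dist_lat_pt) (simp add: power2_eq_square algebra_simps)
  then have "dist (lat_pt eps a b) (lat_pt eps c d) = eps \<longleftrightarrow> sqrt (of_int ?F) = 1"
    using assms by simp
  then show ?thesis
    by (simp only: real_sqrt_eq_1_iff of_int_eq_1_iff unit_form_iff_hex_dirs)
qed

section \<open>Triangles as cells\<close>

(* The lattice lines are the lines on which coord1, coord2 or coord1 + coord2 is an integer; the
   triangles are the cells with k = a + b or k = a + b + 1. *)
definition cell :: "real \<Rightarrow> int \<Rightarrow> int \<Rightarrow> int \<Rightarrow> pt set" where
  "cell eps a b k = {x. coord1 eps x \<in> {of_int a..of_int a + 1} \<and> coord2 eps x \<in> {of_int b..of_int b + 1}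
      \<and> coord1 eps x + coord2 eps x \<in> {of_int k..of_int k + 1}}"

lemma mem_convex_hull_pt_at_iff:
  assumes "eps \<noteq> 0"
  shows "x \<in> convex hull {pt_at eps s1 t1, pt_at eps s2 t2, pt_at eps s3 t3} \<longleftrightarrow>
    (\<exists>v w. 0 \<le> v \<and> 0 \<le> w \<and> v + w \<le> 1 \<and>
       coord1 eps x = s1 + v * (s2 - s1) + w * (s3 - s1) \<and> coord2 eps x = t1 + v * (t2 - t1) + w * (t3 - t1))"
  unfolding convex_hull_3_alt mem_Collect_eq coords_eq_iff[OF assms] using assms by auto

lemma hex_triangle_cases:
  assumes "(p1, q1) \<in> hex_dirs" "(p2, q2) \<in> hex_dirs" "(p2 - p1, q2 - q1) \<in> hex_dirs"
  defines "a0 \<equiv> min 0 (min p1 p2)" and "b0 \<equiv> min 0 (min q1 q2)"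
  shows "{(0, 0), (p1, q1), (p2, q2)} = {(a0, b0), (a0 + 1, b0), (a0, b0 + 1)} \<or>
         {(0, 0), (p1, q1), (p2, q2)} = {(a0 + 1, b0), (a0, b0 + 1), (a0 + 1, b0 + 1)}"
  using assms(1,2) unfolding a0_def b0_def hex_dirs_def
  by (elim insertE emptyE) (use assms(3) in \<open>simp_all add: hex_dirs_def insert_commute\<close>)

lemma convex_hull_up_eq_cell:
  assumes "eps \<noteq> 0"
  shows "convex hull {lat_pt eps a b, lat_pt eps (a + 1) b, lat_pt eps a (b + 1)} = cell eps a b (a + b)"
  unfolding set_eq_iff lat_pt_def mem_convex_hull_pt_at_iff[OF assms] cell_def
proof (intro allI iffI)
  fix x
  assume "x \<in> {x. coord1 eps x \<in> {of_int a..of_int a + 1} \<and> coord2 eps x \<in> {of_int b..of_int b + 1}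
      \<and> coord1 eps x + coord2 eps x \<in> {of_int (a + b)..of_int (a + b) + 1}}"
  then show "\<exists>v w. 0 \<le> v \<and> 0 \<le> w \<and> v + w \<le> 1 \<and>
      coord1 eps x = of_int a + v * (of_int (a + 1) - of_int a) + w * (of_int a - of_int a) \<and>
      coord2 eps x = of_int b + v * (of_int b - of_int b) + w * (of_int (b + 1) - of_int b)"
    by (intro exI[of _ "coord1 eps x - a"] exI[of _ "coord2 eps x - b"]) auto
qed (elim exE conjE, simp)

lemma convex_hull_down_eq_cell:
  assumes "eps \<noteq> 0"
  shows "convex hull {lat_pt eps (a + 1) (b + 1), lat_pt eps a (b + 1), lat_pt eps (a + 1) b} = cell eps a b (a + b + 1)"
  unfolding set_eq_iff lat_pt_def mem_convex_hull_pt_at_iff[OF assms] cell_def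
proof (intro allI iffI)
  fix x
  assume "x \<in> {x. coord1 eps x \<in> {of_int a..of_int a + 1} \<and> coord2 eps x \<in> {of_int b..of_int b + 1}
      \<and> coord1 eps x + coord2 eps x \<in> {of_int (a + b + 1)..of_int (a + b + 1) + 1}}"
  then show "\<exists>v w. 0 \<le> v \<and> 0 \<le> w \<and> v + w \<le> 1 \<and>
      coord1 eps x = of_int (a + 1) + v * (of_int a - of_int (a + 1)) + w * (of_int (a + 1) - of_int (a + 1)) \<and>
      coord2 eps x = of_int (b + 1) + v * (of_int (b + 1) - of_int (b + 1)) + w * (of_int b - of_int (b + 1))"
    by (intro exI[of _ "a + 1 - coord1 eps x"] exI[of _ "b + 1 - coord2 eps x"]) auto
qed (elim exE conjE, simp)

lemma triangle_cases:
  assumes "eps > 0" and "X \<in> triangles eps"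
  shows "\<exists>a b. X = cell eps a b (a + b) \<or> X = cell eps a b (a + b + 1)"
proof -
  obtain x y z where X: "X = convex hull {x, y, z}"
    and "x \<in> lattice eps" "y \<in> lattice eps" "z \<in> lattice eps"
    and dist: "dist x y = eps" "dist y z = eps" "dist x z = eps"
    using assms(2) unfolding triangles_def by blast
  then obtain a b c d g h where xyz: "x = lat_pt eps a b" "y = lat_pt eps c d" "z = lat_pt eps g h"
    unfolding lattice_iff by blast
  have hex: "(c - a, d - b) \<in> hex_dirs" "(g - a, h - b) \<in> hex_dirs" "(g - c, h - d) \<in> hex_dirs"
    using dist unfolding xyz dist_lat_pt_eq_iff[OF assms(1)] by simp_all
  define f where "f = (\<lambda>(m, n). lat_pt eps (a + m) (b + n))"
  have verts: "{x, y, z} = f ` {(0, 0), (c - a, d - b), (g - a, h - b)}"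
    by (simp add: xyz f_def)
  obtain a0 b0 where
    "{(0, 0), (c - a, d - b), (g - a, h - b)} = {(a0, b0), (a0 + 1, b0), (a0, b0 + 1)} \<or>
     {(0, 0), (c - a, d - b), (g - a, h - b)} = {(a0 + 1, b0 + 1), (a0, b0 + 1), (a0 + 1, b0)}"
    using hex_triangle_cases[OF hex(1,2)] hex(3) by (auto simp: insert_commute)
  then show ?thesis
  proof
    assume "{(0, 0), (c - a, d - b), (g - a, h - b)} = {(a0, b0), (a0 + 1, b0), (a0, b0 + 1)}"
    then have "{x, y, z} = {lat_pt eps (a + a0) (b + b0), lat_pt eps (a + a0 + 1) (b + b0),
        lat_pt eps (a + a0) (b + b0 + 1)}"
      by (simp add: verts f_def algebra_simps)
    then have "X = cell eps (a + a0) (b + b0) (a + a0 + (b + b0))"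
      unfolding X using convex_hull_up_eq_cell assms(1) by simp
    then show ?thesis
      by blast
  next
    assume "{(0, 0), (c - a, d - b), (g - a, h - b)} = {(a0 + 1, b0 + 1), (a0, b0 + 1), (a0 + 1, b0)}"
    then have "{x, y, z} = {lat_pt eps (a + a0 + 1) (b + b0 + 1), lat_pt eps (a + a0) (b + b0 + 1),
        lat_pt eps (a + a0 + 1) (b + b0)}"
      by (simp add: verts f_def algebra_simps)
    then have "X = cell eps (a + a0) (b + b0) (a + a0 + (b + b0) + 1)"
      unfolding X using convex_hull_down_eq_cell assms(1) by simp
    then show ?thesis
      by blast
  qed
qed

lemma cells_in_triangles:
  assumes "eps > 0"
  shows "cell eps a b (a + b) \<in> triangles eps" and "cell eps a b (a + b + 1) \<in> triangles eps"
proof -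
  show "cell eps a b (a + b) \<in> triangles eps"
    unfolding triangles_def using convex_hull_up_eq_cell[of eps a b] assms
    by (rule_tac CollectI, rule_tac exI[of _ "lat_pt eps a b"], rule_tac exI[of _ "lat_pt eps (a + 1) b"],
        rule_tac exI[of _ "lat_pt eps a (b + 1)"]) (simp add: dist_lat_pt)
  show "cell eps a b (a + b + 1) \<in> triangles eps"
    unfolding triangles_def using convex_hull_down_eq_cell[of eps a b] assms
    by (rule_tac CollectI, rule_tac exI[of _ "lat_pt eps (a + 1) (b + 1)"],
        rule_tac exI[of _ "lat_pt eps a (b + 1)"], rule_tac exI[of _ "lat_pt eps (a + 1) b"])
      (simp add: dist_lat_pt)
qed

lemma mem_triangles_iff:
  assumes "eps > 0"
  shows "X \<in> triangles eps \<longleftrightarrow> (\<exists>a b. X = cell eps a b (a + b) \<or> X = cell eps a b (a + b + 1))"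
  using triangle_cases[OF assms] cells_in_triangles[OF assms] by blast

lemma lattice_Int_cell:
  assumes "eps \<noteq> 0"
  shows "lattice eps \<inter> cell eps a b k =
    (\<lambda>(c, d). lat_pt eps c d) ` {(c, d). c \<in> {a..a + 1} \<and> d \<in> {b..b + 1} \<and> c + d \<in> {k..k + 1}}"
proof -
  have "lat_pt eps c d \<in> cell eps a b k \<longleftrightarrow> c \<in> {a..a + 1} \<and> d \<in> {b..b + 1} \<and> c + d \<in> {k..k + 1}" for c d
    using assms unfolding cell_def by simp (metis of_int_add of_int_1 of_int_le_iff)
  then show ?thesis
    by (fastforce simp: lattice_iff)
qed

lemma triangle_vertices:
  assumes "eps > 0" and "X \<in> triangles eps"
  obtains x y z where "lattice eps \<inter> X = {x, y, z}"
    and "dist x y = eps" "dist y z = eps" "dist x z = eps"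
proof -
  obtain a b where "X = cell eps a b (a + b) \<or> X = cell eps a b (a + b + 1)"
    using assms mem_triangles_iff by blast
  then show thesis
  proof
    assume X: "X = cell eps a b (a + b)"
    have "{(c, d). c \<in> {a..a + 1} \<and> d \<in> {b..b + 1} \<and> c + d \<in> {a + b..a + b + 1}} =
        {(a, b), (a + 1, b), (a, b + 1)}"
      by auto
    then have "lattice eps \<inter> X = {lat_pt eps a b, lat_pt eps (a + 1) b, lat_pt eps a (b + 1)}"
      using assms(1) by (simp add: X lattice_Int_cell)
    then show thesis
      by (rule that) (use assms(1) in \<open>simp_all add: dist_lat_pt\<close>)
  next
    assume X: "X = cell eps a b (a + b + 1)"
    have "{(c, d). c \<in> {a..a + 1} \<and> d \<in> {b..b + 1} \<and> c + d \<in> {a + b + 1..a + b + 1 + 1}} =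
        {(a + 1, b + 1), (a, b + 1), (a + 1, b)}"
      by auto
    then have "lattice eps \<inter> X = {lat_pt eps (a + 1) (b + 1), lat_pt eps a (b + 1), lat_pt eps (a + 1) b}"
      using assms(1) by (simp add: X lattice_Int_cell)
    then show thesis
      by (rule that) (use assms(1) in \<open>simp_all add: dist_lat_pt\<close>)
  qed
qed

section \<open>Points lying in a single triangle\<close>

lemma int_eq_if_in_unit_intervals:
  fixes r :: real
  assumes "r \<in> {of_int m..of_int m + 1}" and "r \<in> {of_int n<..<of_int n + 1}"
  shows "m = n"
proof -
  have "of_int m < (of_int (n + 1) :: real)" "of_int n < (of_int (m + 1) :: real)"
    using assms by auto
  then show ?thesis
    by linarith
qed

lemma cell_eq_if_mem_interior:
  assumes "y \<in> cell eps a' b' k'" and "coord1 eps y \<in> {of_int a<..<of_int a + 1}"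
    and "coord2 eps y \<in> {of_int b<..<of_int b + 1}"
    and "coord1 eps y + coord2 eps y \<in> {of_int k<..<of_int k + 1}"
  shows "cell eps a' b' k' = cell eps a b k"
proof -
  have "a' = a" "b' = b" "k' = k"
    using assms unfolding cell_def mem_Collect_eq by (meson int_eq_if_in_unit_intervals)+
  then show ?thesis
    by simp
qed

lemma convex_comb_mem_open_interval:
  fixes x c d :: real
  assumes "x \<in> {lo..hi}" and "c \<in> {lo<..<hi}" and "0 < d" and "d \<le> 1"
  shows "(1 - d) * x + d * c \<in> {lo<..<hi}"
proof -
  have "(1 - d) * lo \<le> (1 - d) * x" "(1 - d) * x \<le> (1 - d) * hi" "d * lo < d * c" "d * c < d * hi"
    using assms by (simp_all add: mult_left_mono)
  then show ?thesis
    by (simp add: algebra_simps)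
qed

lemma exists_small_step_towards:
  fixes x c :: "'a::real_normed_vector"
  assumes "r > 0"
  obtains d where "0 < d" and "d \<le> 1" and "dist x (x + d *\<^sub>R (c - x)) < r"
proof -
  define d where "d = r / (r + dist x c)"
  have "r + dist x c > 0"
    using assms by (simp add: add_pos_nonneg)
  then have "0 < d" "d \<le> 1" "d * dist x c < r"
    using assms by (simp_all add: d_def field_simps)
  moreover have "dist x (x + d *\<^sub>R (c - x)) = d * dist x c"
    using \<open>0 < d\<close> by (simp add: dist_norm norm_minus_commute)
  ultimately show thesis
    using that by simp
qed

lemma exists_near_point_only_in_triangle:
  assumes "eps > 0" and "X \<in> triangles eps" and "x \<in> X" and "r > 0"
  obtains y where "y \<in> X" and "dist x y < r" and "\<And>Y. Y \<in> triangles eps \<Longrightarrow> y \<in> Y \<Longrightarrow> Y = X"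
proof -
  obtain a b k where X: "X = cell eps a b k" and k: "k = a + b \<or> k = a + b + 1"
    using assms(2) mem_triangles_iff[OF assms(1)] by blast
  \<comment> \<open>the centroid of \<open>X\<close>\<close>
  define c where "c = pt_at eps (of_int a + (1 + of_int (k - a - b)) / 3) (of_int b + (1 + of_int (k - a - b)) / 3)"
  have c: "coord1 eps c \<in> {of_int a<..<of_int a + 1}" "coord2 eps c \<in> {of_int b<..<of_int b + 1}"
    "coord1 eps c + coord2 eps c \<in> {of_int k<..<of_int k + 1}"
    using k assms(1) by (auto simp: c_def)
  obtain d where d: "0 < d" "d \<le> 1" "dist x (x + d *\<^sub>R (c - x)) < r"
    using exists_small_step_towards[OF assms(4)] by blast
  define y where "y = x + d *\<^sub>R (c - x)"
  have x: "coord1 eps x \<in> {of_int a..of_int a + 1}" "coord2 eps x \<in> {of_int b..of_int b + 1}"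
    "coord1 eps x + coord2 eps x \<in> {of_int k..of_int k + 1}"
    using assms(3) unfolding X cell_def by auto
  have "coord1 eps y = (1 - d) * coord1 eps x + d * coord1 eps c"
    "coord2 eps y = (1 - d) * coord2 eps x + d * coord2 eps c"
    "coord1 eps y + coord2 eps y = (1 - d) * (coord1 eps x + coord2 eps x) + d * (coord1 eps c + coord2 eps c)"
    by (simp_all add: y_def algebra_simps)
  then have y: "coord1 eps y \<in> {of_int a<..<of_int a + 1}" "coord2 eps y \<in> {of_int b<..<of_int b + 1}"
    "coord1 eps y + coord2 eps y \<in> {of_int k<..<of_int k + 1}"
    using convex_comb_mem_open_interval[OF x(1) c(1) d(1,2)] convex_comb_mem_open_interval[OF x(2) c(2) d(1,2)]
      convex_comb_mem_open_interval[OF x(3) c(3) d(1,2)] by simp_all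
  show thesis
  proof (rule that)
    show "y \<in> X"
      using y unfolding X cell_def by auto
    show "dist x y < r"
      using d(3) by (simp add: y_def)
    fix Y
    assume "Y \<in> triangles eps" and "y \<in> Y"
    then obtain a' b' k' where "Y = cell eps a' b' k'"
      using mem_triangles_iff[OF assms(1)] by blast
    with \<open>y \<in> Y\<close> show "Y = X"
      unfolding X using cell_eq_if_mem_interior[OF _ y] by simp
  qed
qed

section \<open>The two triangles at an edge\<close>

definition rotate60 :: "pt \<Rightarrow> pt" where
  "rotate60 x = (fst x / 2 - sqrt 3 / 2 * snd x, sqrt 3 / 2 * fst x + snd x / 2)"

lemma coords_rotate60 [simp]:
  "coord1 eps (rotate60 x) = - coord2 eps x"
  "coord2 eps (rotate60 x) = coord1 eps x + coord2 eps x"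
  by (cases "eps = 0"; simp add: rotate60_def coord1_def coord2_def field_simps)+

lemma linear_rotate60: "linear rotate60"
  by (rule linearI) (simp_all add: rotate60_def field_simps)

lemma inj_rotate60: "inj rotate60"
proof (rule injI)
  fix x y
  assume "rotate60 x = rotate60 y"
  then have "coord1 1 (rotate60 x) = coord1 1 (rotate60 y)" "coord2 1 (rotate60 x) = coord2 1 (rotate60 y)"
    by simp_all
  then show "x = y"
    by (simp add: coords_eq_iff[of 1])
qed

lemma rotate60_lat_pt [simp]: "eps \<noteq> 0 \<Longrightarrow> rotate60 (lat_pt eps a b) = lat_pt eps (- b) (a + b)"
  by (simp add: coords_eq_iff)

lemma rotate60_cell:
  assumes "eps \<noteq> 0"
  shows "rotate60 ` cell eps a b k = cell eps (- b - 1) k a"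
proof
  show "rotate60 ` cell eps a b k \<subseteq> cell eps (- b - 1) k a"
    by (auto simp: cell_def)
  show "cell eps (- b - 1) k a \<subseteq> rotate60 ` cell eps a b k"
  proof
    fix y
    assume y: "y \<in> cell eps (- b - 1) k a"
    let ?x = "pt_at eps (coord1 eps y + coord2 eps y) (- coord1 eps y)"
    have "y = rotate60 ?x"
      using assms by (simp add: coords_eq_iff)
    moreover have "?x \<in> cell eps a b k"
      using assms y by (auto simp: cell_def)
    ultimately show "y \<in> rotate60 ` cell eps a b k"
      by blast
  qed
qed

lemma rotate60_triangles:
  assumes "eps > 0"
  shows "(`) rotate60 ` triangles eps = triangles eps"
proof -
  have rot_up: "rotate60 ` cell eps a b (a + b) = cell eps (- b - 1) (a + b) ((- b - 1) + (a + b) + 1)"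
    and rot_down: "rotate60 ` cell eps a b (a + b + 1) = cell eps (- b - 1) (a + b + 1) ((- b - 1) + (a + b + 1))"
    for a b
    using rotate60_cell assms by simp_all
  have "rotate60 ` X \<in> triangles eps" if X: "X \<in> triangles eps" for X
  proof -
    obtain a b where "X = cell eps a b (a + b) \<or> X = cell eps a b (a + b + 1)"
      using X unfolding mem_triangles_iff[OF assms] by blast
    then show ?thesis
      unfolding mem_triangles_iff[OF assms] using rot_up rot_down by metis
  qed
  moreover have "Y \<in> (`) rotate60 ` triangles eps" if Y: "Y \<in> triangles eps" for Y
  proof -
    obtain a b where "Y = cell eps a b (a + b) \<or> Y = cell eps a b (a + b + 1)"
      using Y unfolding mem_triangles_iff[OF assms] by blast
    moreover have "cell eps a b (a + b) = rotate60 ` cell eps (a + b) (- a - 1) ((a + b) + (- a - 1) + 1)"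
      "cell eps a b (a + b + 1) = rotate60 ` cell eps (a + b + 1) (- a - 1) ((a + b + 1) + (- a - 1))"
      using rotate60_cell assms by simp_all
    ultimately show ?thesis
      using mem_triangles_iff[OF assms] by (metis image_eqI)
  qed
  ultimately show ?thesis
    by (intro equalityI image_subsetI subsetI) simp_all
qed

definition edge_triangles :: "real \<Rightarrow> pt \<Rightarrow> pt \<Rightarrow> pt set \<Rightarrow> pt set \<Rightarrow> bool" where
  "edge_triangles eps p q T1 T2 \<longleftrightarrow> T1 \<in> triangles eps \<and> T2 \<in> triangles eps \<and> T1 \<noteq> T2 \<and>
     T1 \<inter> T2 = closed_segment p q \<and> (\<forall>T\<in>triangles eps. midpoint p q \<in> T \<longrightarrow> T = T1 \<or> T = T2)"

lemma edge_triangles_commute: "edge_triangles eps p q T1 T2 \<Longrightarrow> edge_triangles eps q p T1 T2"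
  unfolding edge_triangles_def by (simp add: closed_segment_commute midpoint_sym)

lemma edge_triangles_rotate60:
  assumes "eps > 0" and "edge_triangles eps p q T1 T2"
  shows "edge_triangles eps (rotate60 p) (rotate60 q) (rotate60 ` T1) (rotate60 ` T2)"
  unfolding edge_triangles_def
proof (intro conjI ballI impI)
  have T: "T1 \<in> triangles eps" "T2 \<in> triangles eps" "T1 \<noteq> T2" "T1 \<inter> T2 = closed_segment p q"
    and mid: "\<And>T. T \<in> triangles eps \<Longrightarrow> midpoint p q \<in> T \<Longrightarrow> T = T1 \<or> T = T2"
    using assms(2) unfolding edge_triangles_def by blast+
  show "rotate60 ` T1 \<in> triangles eps" "rotate60 ` T2 \<in> triangles eps"
    using T(1,2) rotate60_triangles[OF assms(1)] by blast+
  show "rotate60 ` T1 \<noteq> rotate60 ` T2"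
    using T(3) inj_rotate60 by (simp add: inj_image_eq_iff)
  show "rotate60 ` T1 \<inter> rotate60 ` T2 = closed_segment (rotate60 p) (rotate60 q)"
    using T(4) by (simp add: image_Int[OF inj_rotate60, symmetric] closed_segment_linear_image[OF linear_rotate60])
  fix T
  assume "T \<in> triangles eps" and "midpoint (rotate60 p) (rotate60 q) \<in> T"
  then obtain T0 where "T0 \<in> triangles eps" "T = rotate60 ` T0" "rotate60 (midpoint p q) \<in> rotate60 ` T0"
    using rotate60_triangles[OF assms(1)] midpoint_linear_image[OF linear_rotate60] by (metis imageE)
  then show "T = rotate60 ` T1 \<or> T = rotate60 ` T2"
    using mid inj_image_mem_iff[OF inj_rotate60] by blast
qed

lemma closed_segment_horizontal:
  assumes "eps \<noteq> 0"
  shows "closed_segment (lat_pt eps a b) (lat_pt eps (a + 1) b) =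
    {x. coord1 eps x \<in> {of_int a..of_int a + 1} \<and> coord2 eps x = of_int b}"
  unfolding set_eq_iff in_segment coords_eq_iff[OF assms] using assms
  by (auto simp: algebra_simps intro!: exI[of _ "coord1 eps x - of_int a" for x])

lemma horizontal_edge_triangles:
  assumes "eps > 0"
  shows "edge_triangles eps (lat_pt eps a b) (lat_pt eps (a + 1) b) (cell eps a b (a + b)) (cell eps a (b - 1) (a + b))"
  unfolding edge_triangles_def
proof (intro conjI ballI impI)
  have eps: "eps \<noteq> 0"
    using assms by simp
  show "cell eps a b (a + b) \<in> triangles eps" "cell eps a (b - 1) (a + b) \<in> triangles eps"
    unfolding mem_triangles_iff[OF assms] by (metis diff_add_cancel add.assoc)+
  have "lat_pt eps a (b + 1) \<in> cell eps a b (a + b)" "lat_pt eps a (b + 1) \<notin> cell eps a (b - 1) (a + b)"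
    using eps by (simp_all add: cell_def)
  then show "cell eps a b (a + b) \<noteq> cell eps a (b - 1) (a + b)"
    by blast
  show "cell eps a b (a + b) \<inter> cell eps a (b - 1) (a + b) = closed_segment (lat_pt eps a b) (lat_pt eps (a + 1) b)"
    unfolding closed_segment_horizontal[OF eps] by (auto simp: cell_def)
  fix T
  assume "T \<in> triangles eps" and mid: "midpoint (lat_pt eps a b) (lat_pt eps (a + 1) b) \<in> T"
  then obtain a' b' where T: "T = cell eps a' b' (a' + b') \<or> T = cell eps a' b' (a' + b' + 1)"
    unfolding mem_triangles_iff[OF assms] by blast
  let ?m = "midpoint (lat_pt eps a b) (lat_pt eps (a + 1) b)"
  have m: "coord1 eps ?m \<in> {of_int a<..<of_int a + 1}"
    "coord1 eps ?m + coord2 eps ?m \<in> {of_int (a + b)<..<of_int (a + b) + 1}"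
    using eps by (simp_all add: midpoint_def)
  from T show "T = cell eps a b (a + b) \<or> T = cell eps a (b - 1) (a + b)"
  proof
    assume T: "T = cell eps a' b' (a' + b')"
    then have "a' = a" "a' + b' = a + b"
      using mid m int_eq_if_in_unit_intervals unfolding cell_def by blast+
    then show ?thesis
      using T by simp
  next
    assume T: "T = cell eps a' b' (a' + b' + 1)"
    then have "a' = a" "a' + b' + 1 = a + b"
      using mid m int_eq_if_in_unit_intervals unfolding cell_def by blast+
    then have "a' = a" "b' = b - 1" "a' + b' + 1 = a + b"
      by simp_all
    then show ?thesis
      using T by metis
  qed
qed

lemma edge_triangles_exist:
  assumes "eps > 0" and "p \<in> lattice eps" and "q \<in> lattice eps" and "dist p q = eps"
  obtains T1 T2 where "edge_triangles eps p q T1 T2"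
proof -
  have eps: "eps \<noteq> 0"
    using assms(1) by simp
  have horizontal: "\<exists>T1 T2. edge_triangles eps (lat_pt eps a b) (lat_pt eps (a + 1) b) T1 T2" for a b
    using horizontal_edge_triangles[OF assms(1)] by blast
  \<comment> \<open>the rotation maps the horizontal edge at \<open>(a + b, - a)\<close> onto the vertical edge at \<open>(a, b)\<close>,
      and the vertical edge at \<open>(a + b, - a)\<close> onto the diagonal edge at \<open>(a, b)\<close>\<close>
  have vertical: "\<exists>T1 T2. edge_triangles eps (lat_pt eps a b) (lat_pt eps a (b + 1)) T1 T2" for a b
    using horizontal[of "a + b" "- a"] edge_triangles_rotate60[OF assms(1)] eps
    by (fastforce simp: algebra_simps)
  have diagonal: "\<exists>T1 T2. edge_triangles eps (lat_pt eps a b) (lat_pt eps (a - 1) (b + 1)) T1 T2" for a b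
    using vertical[of "a + b" "- a"] edge_triangles_rotate60[OF assms(1)] eps
    by (fastforce simp: algebra_simps)
  obtain a b c d where pq: "p = lat_pt eps a b" "q = lat_pt eps c d"
    using assms(2,3) unfolding lattice_iff by blast
  then have "(c - a, d - b) \<in> hex_dirs"
    using assms(4) dist_lat_pt_eq_iff[OF assms(1)] by simp
  then consider "c = a + 1" "d = b" | "c = a" "d = b + 1" | "c = a - 1" "d = b + 1"
    | "a = c + 1" "b = d" | "a = c" "b = d + 1" | "a = c - 1" "b = d + 1"
    unfolding hex_dirs_def by auto
  then have "\<exists>T1 T2. edge_triangles eps p q T1 T2"
    unfolding pq by cases (use horizontal vertical diagonal edge_triangles_commute in blast)+
  then show thesis
    using that by blast
qed

section \<open>Paths in graphs of maximal degree two\<close>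

definition at_most_one_neighbour :: "('a \<Rightarrow> 'a \<Rightarrow> bool) \<Rightarrow> 'a \<Rightarrow> bool" where
  "at_most_one_neighbour H X \<longleftrightarrow> (\<forall>Y Y'. H X Y \<longrightarrow> H X Y' \<longrightarrow> Y = Y')"

lemma rtranclp_simple_path:
  assumes "H\<^sup>*\<^sup>* A B"
  obtains f n where "f 0 = A" and "f n = B" and "\<And>i. i < n \<Longrightarrow> H (f i) (f (Suc i))" and "inj_on f {..n}"
proof -
  obtain xs where "rtrancl_path H A xs B"
    using assms rtranclp_eq_rtrancl_path by metis
  then obtain ys where path: "rtrancl_path H A ys B" and distinct: "distinct (A # ys)"
    using rtrancl_path_distinct by metis
  show thesis
  proof (rule that)
    show "(A # ys) ! 0 = A"
      by simp
    show "(A # ys) ! length ys = B"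
    proof (cases "ys = []")
      case True
      then show ?thesis
        using path by (auto elim: rtrancl_path.cases)
    next
      case False
      then have "(A # ys) ! length ys = last ys"
        by (cases ys) (simp_all add: last_conv_nth)
      then show ?thesis
        using rtrancl_path_last[OF path False] by simp
    qed
    show "H ((A # ys) ! i) ((A # ys) ! Suc i)" if "i < length ys" for i
      using rtrancl_path_nth[OF path that] by simp
    show "inj_on ((!) (A # ys)) {..length ys}"
      using distinct by (intro inj_on_nth) auto
  qed
qed

lemma simple_paths_from_leaf_agree:
  assumes sym: "\<And>X Y. H X Y \<Longrightarrow> H Y X"
    and deg: "\<And>X Y1 Y2 Y3. H X Y1 \<Longrightarrow> H X Y2 \<Longrightarrow> H X Y3 \<Longrightarrow> Y1 = Y2 \<or> Y1 = Y3 \<or> Y2 = Y3"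
    and leaf: "at_most_one_neighbour H (f 0)"
    and f: "\<And>i. i < n \<Longrightarrow> H (f i) (f (Suc i))" "inj_on f {..n}"
    and g: "g 0 = f 0" "\<And>i. i < m \<Longrightarrow> H (g i) (g (Suc i))" "inj_on g {..m}"
  shows "k \<le> n \<Longrightarrow> k \<le> m \<Longrightarrow> f k = g k"
proof (induction k rule: less_induct)
  case (less k)
  consider "k = 0" | "k = 1" | j where "k = Suc (Suc j)"
    by (metis One_nat_def not0_implies_Suc)
  then show ?case
  proof cases
    case 1
    then show ?thesis
      using g(1) by simp
  next
    case 2
    then show ?thesis
      using leaf f(1)[of 0] g(2)[of 0] less.prems g(1) unfolding at_most_one_neighbour_def by simp
  next
    case (3 j)
    have IH: "f j = g j" "f (Suc j) = g (Suc j)"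
      using less 3 by simp_all
    have "H (f (Suc j)) (f j)"
      using sym f(1)[of j] less.prems 3 by simp
    moreover have "H (f (Suc j)) (f k)"
      using f(1)[of "Suc j"] less.prems 3 by simp
    moreover have "H (f (Suc j)) (g k)"
      using g(2)[of "Suc j"] less.prems 3 IH(2) by simp
    moreover have "f j \<noteq> f k" "g j \<noteq> g k"
      using f(2) g(3) less.prems 3 by (auto dest: inj_onD)
    ultimately show ?thesis
      using deg IH by metis
  qed
qed

lemma simple_path_leaf_is_last:
  assumes sym: "\<And>X Y. H X Y \<Longrightarrow> H Y X"
    and g: "\<And>i. i < m \<Longrightarrow> H (g i) (g (Suc i))" "inj_on g {..m}"
    and leaf: "at_most_one_neighbour H (g n)" and "0 < n" and "n \<le> m"
  shows "n = m"
proof (rule ccontr)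
  assume "n \<noteq> m"
  with \<open>n \<le> m\<close> have "n < m"
    by simp
  have "H (g (n - 1)) (g n)"
    using g(1)[of "n - 1"] \<open>0 < n\<close> \<open>n < m\<close> by simp
  then have "H (g n) (g (n - 1))" "H (g n) (g (Suc n))"
    using g(1)[of n] sym \<open>n < m\<close> by simp_all
  moreover have "g (n - 1) \<noteq> g (Suc n)"
    using g(2) \<open>n < m\<close> by (auto dest: inj_onD)
  ultimately show False
    using leaf unfolding at_most_one_neighbour_def by blast
qed

lemma leaves_reachable_from_leaf_eq:
  assumes sym: "\<And>X Y. H X Y \<Longrightarrow> H Y X"
    and deg: "\<And>X Y1 Y2 Y3. H X Y1 \<Longrightarrow> H X Y2 \<Longrightarrow> H X Y3 \<Longrightarrow> Y1 = Y2 \<or> Y1 = Y3 \<or> Y2 = Y3"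
    and leaves: "at_most_one_neighbour H A" "at_most_one_neighbour H B" "at_most_one_neighbour H C"
    and "H\<^sup>*\<^sup>* A B" and "H\<^sup>*\<^sup>* A C" and "A \<noteq> B" and "A \<noteq> C"
  shows "B = C"
proof -
  obtain n f where f: "f 0 = A" "f n = B" "\<And>i. i < n \<Longrightarrow> H (f i) (f (Suc i))" "inj_on f {..n}"
    using rtranclp_simple_path[OF \<open>H\<^sup>*\<^sup>* A B\<close>] by metis
  obtain m g where g: "g 0 = A" "g m = C" "\<And>i. i < m \<Longrightarrow> H (g i) (g (Suc i))" "inj_on g {..m}"
    using rtranclp_simple_path[OF \<open>H\<^sup>*\<^sup>* A C\<close>] by metis
  have agree: "f k = g k" if "k \<le> n" "k \<le> m" for k
    using simple_paths_from_leaf_agree[where H = H and f = f and n = n and g = g and m = m] sym deg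
      leaves(1) f g that by simp
  have "0 < n" "0 < m"
    using f(1,2) g(1,2) \<open>A \<noteq> B\<close> \<open>A \<noteq> C\<close> by (auto intro: gr0I)
  show "B = C"
  proof (cases "n \<le> m")
    case True
    then have "n = m"
      using simple_path_leaf_is_last[where H = H and g = g and m = m and n = n, OF sym g(3,4)]
        agree[of n] f(2) leaves(2) \<open>0 < n\<close> by simp
    then show ?thesis
      using agree f(2) g(2) by simp
  next
    case False
    then have "m = n"
      using simple_path_leaf_is_last[where H = H and g = f and m = n and n = m, OF sym f(3,4)]
        agree[of m] g(2) leaves(3) \<open>0 < m\<close> by simp
    then show ?thesis
      using agree f(2) g(2) by simp
  qed
qed

section \<open>Chains of neighbouring triangles\<close>

lemma SF_neq_antipode:
  assumes "u \<in> SF eps \<Omega>" and "i \<in> lattice eps"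
  shows "u i \<noteq> - u i"
proof
  assume "u i = - u i"
  then have "(2::real) *\<^sub>R u i = 0"
    by (metis add.right_inverse scaleR_2)
  moreover have "norm (u i) = 1"
    using assms unfolding SF_def by simp
  ultimately show False
    by simp
qed

lemma insert3_eq_by_two:
  assumes "p \<in> {x, y, z}" and "q \<in> {x, y, z}" and "p \<noteq> q"
  obtains r where "{x, y, z} = {p, q, r}"
  using assms by (auto simp: insert_commute)

lemma triangle_third_vertex:
  assumes "eps > 0" and "X \<in> triangles eps" and "p \<in> lattice eps \<inter> X" and "q \<in> lattice eps \<inter> X" and "p \<noteq> q"
  obtains r where "lattice eps \<inter> X = {p, q, r}"
proof -
  obtain x y z where xyz: "lattice eps \<inter> X = {x, y, z}"
    using triangle_vertices[OF assms(1,2)] by metis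
  then show thesis
    using insert3_eq_by_two assms(3-5) that by metis
qed

lemma triangle_ne_closed_segment:
  assumes "eps > 0" and "X \<in> triangles eps" and "p \<in> lattice eps" and "q \<in> lattice eps" and "dist p q = eps"
  shows "X \<noteq> closed_segment p q"
proof
  assume X: "X = closed_segment p q"
  obtain T1 T2 where "edge_triangles eps p q T1 T2"
    using edge_triangles_exist[OF assms(1,3-5)] .
  then have T: "T1 \<in> triangles eps" "T2 \<in> triangles eps" "T1 \<noteq> T2" "T1 \<inter> T2 = X"
    unfolding edge_triangles_def X by blast+
  have "p \<in> X"
    using X by simp
  then obtain y where "y \<in> X" "\<And>Y. Y \<in> triangles eps \<Longrightarrow> y \<in> Y \<Longrightarrow> Y = X"
    using exists_near_point_only_in_triangle[OF assms(1,2)] zero_less_one by metis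
  then show False
    using T by blast
qed

lemma convex_triangle: "X \<in> triangles eps \<Longrightarrow> convex X"
  unfolding triangles_def by (auto simp: convex_convex_hull)

lemma triangles_through_edge:
  assumes "eps > 0" and "p \<in> lattice eps" and "q \<in> lattice eps" and "dist p q = eps"
    and "X \<in> triangles eps" and "p \<in> X" and "q \<in> X"
  obtains Z where "\<And>Y. Y \<in> triangles eps \<Longrightarrow> p \<in> Y \<Longrightarrow> q \<in> Y \<Longrightarrow> Y = X \<or> Y = Z"
proof -
  obtain T1 T2 where "edge_triangles eps p q T1 T2"
    using edge_triangles_exist[OF assms(1-4)] .
  then have T: "\<And>Y. Y \<in> triangles eps \<Longrightarrow> midpoint p q \<in> Y \<Longrightarrow> Y = T1 \<or> Y = T2"
    unfolding edge_triangles_def by blast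
  have mid: "midpoint p q \<in> Y" if "Y \<in> triangles eps" "p \<in> Y" "q \<in> Y" for Y
    using convex_triangle[OF that(1)] that(2,3) midpoint_in_closed_segment
    by (meson convex_contains_segment subsetD)
  from T[OF assms(5) mid[OF assms(5-7)]] show thesis
  proof
    assume "X = T1"
    then show thesis
      by (rule_tac that[of T2]) (use T mid in blast)
  next
    assume "X = T2"
    then show thesis
      by (rule_tac that[of T1]) (use T mid in blast)
  qed
qed

definition antipodal_values :: "real \<Rightarrow> (pt \<Rightarrow> spin) \<Rightarrow> pt set \<Rightarrow> spin set" where
  "antipodal_values eps u X = {u p | p. p \<in> lattice eps \<inter> X \<and> (\<exists>q \<in> lattice eps \<inter> X. u q = - u p)}"

lemma antipodal_values_eq:
  assumes "eps > 0" and u: "u \<in> SF eps \<Omega>" and "X \<in> triangles eps"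
    and p: "p \<in> lattice eps \<inter> X" and q: "q \<in> lattice eps \<inter> X" and pq: "u p = - u q"
  shows "antipodal_values eps u X = {u p, u q}"
proof
  have "p \<noteq> q"
    using pq SF_neq_antipode[OF u, of q] q by auto
  then obtain r where r: "lattice eps \<inter> X = {p, q, r}"
    using triangle_third_vertex[OF assms(1,3) p q] by blast
  have "u r \<noteq> - u r"
    using SF_neq_antipode[OF u] r by blast
  then show "antipodal_values eps u X \<subseteq> {u p, u q}"
    unfolding antipodal_values_def r using pq by auto
  have "u q = - u p"
    using pq by simp
  then show "{u p, u q} \<subseteq> antipodal_values eps u X"
    unfolding antipodal_values_def using p q pq by blast
qed

lemma neighboursD:
  assumes "neighbours eps u X Y"
  obtains p q where "X \<in> triangles eps" "Y \<in> triangles eps" "p \<in> lattice eps" "q \<in> lattice eps"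
    "dist p q = eps" "u p = - u q" "X \<inter> Y = closed_segment p q"
  using assms unfolding neighbours_def Nedges_def by blast

lemma neighbours_sym: "neighbours eps u X Y \<Longrightarrow> neighbours eps u Y X"
  unfolding neighbours_def by (simp add: Int_commute)

lemma neighbours_irrefl: "eps > 0 \<Longrightarrow> \<not> neighbours eps u X X"
  by (metis neighboursD inf.idem triangle_ne_closed_segment)

lemma neighbours_antipodal_values_eq:
  assumes "eps > 0" and "u \<in> SF eps \<Omega>" and "neighbours eps u X Y"
  shows "antipodal_values eps u X = antipodal_values eps u Y"
proof -
  obtain p q where XY: "X \<in> triangles eps" "Y \<in> triangles eps"
    and pq: "p \<in> lattice eps" "q \<in> lattice eps" "u p = - u q"
    and edge: "X \<inter> Y = closed_segment p q"
    using neighboursD[OF assms(3)] by metis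
  have "p \<in> X \<inter> Y" "q \<in> X \<inter> Y"
    using edge by auto
  then have "antipodal_values eps u X = {u p, u q}" "antipodal_values eps u Y = {u p, u q}"
    using antipodal_values_eq[OF assms(1,2) XY(1) _ _ pq(3)] antipodal_values_eq[OF assms(1,2) XY(2) _ _ pq(3)]
      pq(1,2) by simp_all
  then show ?thesis
    by simp
qed

lemma rtranclp_neighbours_antipodal_values_eq:
  assumes "eps > 0" and "u \<in> SF eps \<Omega>" and "(neighbours eps u)\<^sup>*\<^sup>* X Y"
  shows "antipodal_values eps u X = antipodal_values eps u Y"
  using assms(3) by induction (auto dest: neighbours_antipodal_values_eq[OF assms(1,2)])

lemma neighbours_across_edges:
  assumes "eps > 0" and "X \<in> triangles eps" and V: "lattice eps \<inter> X = {x, y, z}"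
    and "dist x y = eps" "dist y z = eps" "dist x z = eps"
  obtains Zxy Zyz Zxz where "\<And>Y. neighbours eps u X Y \<Longrightarrow>
    (Y = Zxy \<and> u x = - u y) \<or> (Y = Zyz \<and> u y = - u z) \<or> (Y = Zxz \<and> u x = - u z)"
proof -
  have xyz: "x \<in> lattice eps" "y \<in> lattice eps" "z \<in> lattice eps" "x \<in> X" "y \<in> X" "z \<in> X"
    using V by blast+
  obtain Zxy where Zxy: "\<And>Y. Y \<in> triangles eps \<Longrightarrow> x \<in> Y \<Longrightarrow> y \<in> Y \<Longrightarrow> Y = X \<or> Y = Zxy"
    using triangles_through_edge[OF assms(1) xyz(1,2) assms(4,2) xyz(4,5)] by blast
  obtain Zyz where Zyz: "\<And>Y. Y \<in> triangles eps \<Longrightarrow> y \<in> Y \<Longrightarrow> z \<in> Y \<Longrightarrow> Y = X \<or> Y = Zyz"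
    using triangles_through_edge[OF assms(1) xyz(2,3) assms(5,2) xyz(5,6)] by blast
  obtain Zxz where Zxz: "\<And>Y. Y \<in> triangles eps \<Longrightarrow> x \<in> Y \<Longrightarrow> z \<in> Y \<Longrightarrow> Y = X \<or> Y = Zxz"
    using triangles_through_edge[OF assms(1) xyz(1,3) assms(6,2) xyz(4,6)] by blast
  show thesis
  proof (rule that)
    fix Y
    assume XY: "neighbours eps u X Y"
    then obtain p q where Y: "Y \<in> triangles eps" and pq: "p \<in> lattice eps" "q \<in> lattice eps"
      "dist p q = eps" "u p = - u q" and edge: "X \<inter> Y = closed_segment p q"
      using neighboursD by metis
    have "p \<in> {x, y, z}" "q \<in> {x, y, z}" "p \<in> Y" "q \<in> Y" "p \<noteq> q" "u q = - u p"
      using edge V pq assms(1) by auto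
    then have "(x \<in> Y \<and> y \<in> Y \<and> u x = - u y) \<or> (y \<in> Y \<and> z \<in> Y \<and> u y = - u z) \<or>
        (x \<in> Y \<and> z \<in> Y \<and> u x = - u z)"
      using pq(4) by auto
    moreover have "Y \<noteq> X"
      using XY neighbours_irrefl[OF assms(1)] by blast
    ultimately show "(Y = Zxy \<and> u x = - u y) \<or> (Y = Zyz \<and> u y = - u z) \<or> (Y = Zxz \<and> u x = - u z)"
      using Y Zxy Zyz Zxz by blast
  qed
qed

lemma neighbours_degree_le_two:
  assumes "eps > 0" and u: "u \<in> SF eps \<Omega>"
    and "neighbours eps u X Y1" "neighbours eps u X Y2" "neighbours eps u X Y3"
  shows "Y1 = Y2 \<or> Y1 = Y3 \<or> Y2 = Y3"
proof -
  have X: "X \<in> triangles eps"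
    using assms(3) neighboursD by metis
  obtain x y z where V: "lattice eps \<inter> X = {x, y, z}" and d: "dist x y = eps" "dist y z = eps" "dist x z = eps"
    using triangle_vertices[OF assms(1) X] by metis
  obtain Zxy Zyz Zxz where Z: "\<And>Y. neighbours eps u X Y \<Longrightarrow>
      (Y = Zxy \<and> u x = - u y) \<or> (Y = Zyz \<and> u y = - u z) \<or> (Y = Zxz \<and> u x = - u z)"
    using neighbours_across_edges[where u = u, OF assms(1) X V d] by metis
  have "u z \<noteq> - u z"
    using SF_neq_antipode[OF u] V by blast
  then have "\<not> (u x = - u y \<and> u y = - u z \<and> u x = - u z)"
    by (metis minus_minus)
  then show ?thesis
    using Z assms(3-5) by blast
qed

lemma neighbour_unique_if_not_all_antipodal:
  assumes "eps > 0" and "\<not> u ` (lattice eps \<inter> X) \<subseteq> antipodal_values eps u X"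
  shows "at_most_one_neighbour (neighbours eps u) X"
  unfolding at_most_one_neighbour_def
proof (intro allI impI)
  fix Y Y'
  assume XY: "neighbours eps u X Y" and XY': "neighbours eps u X Y'"
  have X: "X \<in> triangles eps"
    using XY neighboursD by metis
  obtain x y z where V: "lattice eps \<inter> X = {x, y, z}" and d: "dist x y = eps" "dist y z = eps" "dist x z = eps"
    using triangle_vertices[OF assms(1) X] by metis
  obtain Zxy Zyz Zxz where Z: "\<And>Y. neighbours eps u X Y \<Longrightarrow>
      (Y = Zxy \<and> u x = - u y) \<or> (Y = Zyz \<and> u y = - u z) \<or> (Y = Zxz \<and> u x = - u z)"
    using neighbours_across_edges[where u = u, OF assms(1) X V d] by metis
  have "\<not> (\<forall>w\<in>{x, y, z}. \<exists>w'\<in>{x, y, z}. u w' = - u w)"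
    using assms(2) unfolding V antipodal_values_def by blast
  then have "\<not> ((u x = - u y \<and> u y = - u z) \<or> (u x = - u y \<and> u x = - u z) \<or> (u y = - u z \<and> u x = - u z))"
    by (auto simp: minus_equation_iff[of "u x"] minus_equation_iff[of "u y"])
  then show "Y = Y'"
    using Z[OF XY] Z[OF XY'] by blast
qed

lemma at_most_one_neighbour_if_mixed_edge:
  assumes "eps > 0" and u: "u \<in> SF eps \<Omega>" and "neighbours eps u T Y"
    and i: "i \<in> lattice eps \<inter> T" and j: "j \<in> lattice eps \<inter> T" and ij: "u i \<notin> {u j, - u j}"
  shows "at_most_one_neighbour (neighbours eps u) T"
proof (rule neighbour_unique_if_not_all_antipodal[OF assms(1)], rule notI)
  assume all: "u ` (lattice eps \<inter> T) \<subseteq> antipodal_values eps u T"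
  obtain p q where T: "T \<in> triangles eps" and pq: "p \<in> lattice eps" "q \<in> lattice eps" "u p = - u q"
    and edge: "T \<inter> Y = closed_segment p q"
    using neighboursD[OF assms(3)] by metis
  then have "antipodal_values eps u T = {u p, - u p}"
    using antipodal_values_eq[OF assms(1) u T, of p q] edge by auto
  with all have "u i \<in> {u p, - u p}" "u j \<in> {u p, - u p}"
    using i j by blast+
  then show False
    using ij by auto
qed

lemma values_of_mixed_edge_triangle:
  assumes "eps > 0" and u: "u \<in> SF eps \<Omega>" and "neighbours eps u T Y"
    and i: "i \<in> lattice eps \<inter> T" and j: "j \<in> lattice eps \<inter> T" and ij: "u i \<notin> {u j, - u j}"
  shows "u ` (lattice eps \<inter> T) \<subseteq> insert (u i) (insert (u j) (antipodal_values eps u T))"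
proof -
  obtain p q where T: "T \<in> triangles eps" and pq: "p \<in> lattice eps" "q \<in> lattice eps" "dist p q = eps"
    "u p = - u q" and edge: "T \<inter> Y = closed_segment p q"
    using neighboursD[OF assms(3)] by metis
  have "i \<noteq> j"
    using ij by auto
  then obtain k where V: "lattice eps \<inter> T = {i, j, k}"
    using triangle_third_vertex[OF assms(1) T i j] by blast
  have pqT: "p \<in> lattice eps \<inter> T" "q \<in> lattice eps \<inter> T" "p \<noteq> q"
    using pq edge assms(1) by auto
  have "k = p \<or> k = q"
  proof (rule ccontr)
    assume "\<not> (k = p \<or> k = q)"
    then have "(p = i \<and> q = j) \<or> (p = j \<and> q = i)"
      using pqT unfolding V by auto
    then show False
      using pq(4) ij by auto
  qed
  then have "u k \<in> antipodal_values eps u T"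
    using antipodal_values_eq[OF assms(1) u T pqT(1,2) pq(4)] by auto
  then show ?thesis
    unfolding V by auto
qed

lemma region_values_subset:
  assumes "eps > 0" and u: "u \<in> SF eps \<Omega>" and S: "S \<subseteq> triangles eps"
    and conn: "\<forall>T\<in>S. \<forall>T'\<in>S. tri_connected eps u T T'"
    and T: "T \<in> S" and T': "T' \<in> S" and "T \<noteq> T'"
    and i: "i \<in> lattice eps \<inter> T \<inter> T'" and j: "j \<in> lattice eps \<inter> T \<inter> T'" and ij: "u i \<notin> {u j, - u j}"
  shows "u ` (lattice eps \<inter> \<Union>S) \<subseteq> u ` (lattice eps \<inter> T)"
proof -
  let ?H = "neighbours eps u"
  have path: "?H\<^sup>*\<^sup>* T X" if "X \<in> S" for X
    using conn T that unfolding tri_connected_def by blast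
  obtain Y where Y: "?H T Y"
    using path[OF T'] \<open>T \<noteq> T'\<close> by (metis converse_rtranclpE)
  obtain Y' where Y': "?H T' Y'"
    using path[OF T'] \<open>T \<noteq> T'\<close> neighbours_sym by (metis rtranclp.cases)
  have ijT: "i \<in> lattice eps \<inter> T" "j \<in> lattice eps \<inter> T"
    and ijT': "i \<in> lattice eps \<inter> T'" "j \<in> lattice eps \<inter> T'"
    using i j by blast+
  have leaf_T: "at_most_one_neighbour ?H T" and leaf_T': "at_most_one_neighbour ?H T'"
    using at_most_one_neighbour_if_mixed_edge[OF assms(1) u] Y Y' ijT ijT' ij by blast+
  have antipodal_eq: "antipodal_values eps u X = antipodal_values eps u T" if "X \<in> S" for X
    using rtranclp_neighbours_antipodal_values_eq[OF assms(1) u path[OF that]] by simp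
  have antipodal_T: "antipodal_values eps u T \<subseteq> u ` (lattice eps \<inter> T)"
    unfolding antipodal_values_def by blast
  have "u ` (lattice eps \<inter> X) \<subseteq> u ` (lattice eps \<inter> T)" if X: "X \<in> S" for X
  proof (cases "X = T'")
    case True
    then show ?thesis
      using values_of_mixed_edge_triangle[OF assms(1) u Y' ijT' ij] antipodal_eq[OF T'] antipodal_T ijT by auto
  next
    case False
    have "\<not> at_most_one_neighbour ?H X" if "X \<noteq> T"
    proof
      assume "at_most_one_neighbour ?H X"
      then have "T' = X"
        using leaves_reachable_from_leaf_eq[where H = "neighbours eps u" and A = T and B = T' and C = X]
          neighbours_sym neighbours_degree_le_two[OF assms(1) u] leaf_T leaf_T' path[OF T'] path[OF X]
          \<open>T \<noteq> T'\<close> that by blast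
      with False show False
        by simp
    qed
    then have "X = T \<or> u ` (lattice eps \<inter> X) \<subseteq> antipodal_values eps u X"
      using neighbour_unique_if_not_all_antipodal[OF assms(1)] by blast
    then show ?thesis
      using antipodal_eq[OF X] antipodal_T by auto
  qed
  then show ?thesis
    by blast
qed

lemma dist_if_edge: "closed_segment i j \<in> edges eps \<Longrightarrow> dist i j = eps"
  unfolding edges_def by (auto simp: closed_segment_eq doubleton_eq_iff dist_commute)

lemma closed_segment_in_Cedges:
  assumes "closed_segment i j \<in> edges eps" and "u i \<noteq> - u j"
  shows "closed_segment i j \<in> Cedges eps u"
proof -
  have "closed_segment i j \<notin> Nedges eps u"
  proof
    assume "closed_segment i j \<in> Nedges eps u"
    then obtain p q where "{i, j} = {p, q}" "u p = - u q"
      unfolding Nedges_def by (auto simp: closed_segment_eq)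
    then show False
      using assms(2) by (auto simp: doubleton_eq_iff)
  qed
  then show ?thesis
    using assms(1) unfolding Cedges_def by blast
qed

lemma triangle_Int_interior_Union_empty:
  assumes "eps > 0" and "S \<subseteq> triangles eps" and "T \<in> triangles eps" and "T \<notin> S"
  shows "T \<inter> interior (\<Union>S) = {}"
proof (rule ccontr)
  assume "T \<inter> interior (\<Union>S) \<noteq> {}"
  then obtain x r where "x \<in> T" "r > 0" "ball x r \<subseteq> \<Union>S"
    by (auto simp: mem_interior)
  then obtain y where "dist x y < r" "\<And>Y. Y \<in> triangles eps \<Longrightarrow> y \<in> Y \<Longrightarrow> Y = T"
    using exists_near_point_only_in_triangle[OF assms(1,3)] by metis
  moreover have "y \<in> \<Union>S"
    using \<open>dist x y < r\<close> \<open>ball x r \<subseteq> \<Union>S\<close> by auto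
  ultimately have "T \<in> S"
    using assms(2) by blast
  with assms(4) show False ..
qed

lemma card_le_3_if_subset_image_triangle_vertices:
  assumes "eps > 0" and "T \<in> triangles eps" and "F \<subseteq> f ` (lattice eps \<inter> T)"
  shows "card F \<le> 3"
proof -
  obtain x y z where V: "lattice eps \<inter> T = {x, y, z}"
    using triangle_vertices[OF assms(1,2)] by metis
  have "card F \<le> card (f ` {x, y, z})"
    using assms(3) unfolding V by (intro card_mono) auto
  also have "\<dots> \<le> card {x, y, z}"
    by (rule card_image_le) simp
  also have "\<dots> \<le> 3"
    by (simp add: card_insert_if)
  finally show ?thesis .
qed

lemma mixed_edge_triangle_not_in_region:
  assumes "eps > 0" and "u \<in> SF eps \<Omega>" and S: "S \<subseteq> triangles eps"
    and "\<forall>T\<in>S. \<forall>T'\<in>S. tri_connected eps u T T'"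
    and "T \<in> S" and "T \<noteq> T'"
    and "i \<in> lattice eps \<inter> T \<inter> T'" and "j \<in> lattice eps \<inter> T \<inter> T'" and "u i \<notin> {u j, - u j}"
    and F: "F \<subseteq> u ` (lattice eps \<inter> \<Union>S)" "card F = 4"
  shows "T' \<notin> S"
proof
  assume "T' \<in> S"
  then have "F \<subseteq> u ` (lattice eps \<inter> T)"
    using region_values_subset[OF assms(1-5) _ assms(6-9)] F(1) by blast
  moreover have "T \<in> triangles eps"
    using S \<open>T \<in> S\<close> by blast
  ultimately have "card F \<le> 3"
    using card_le_3_if_subset_image_triangle_vertices[OF assms(1)] by blast
  with F(2) show False
    by simp
qed

theorem lemma5p5:
  fixes eps :: real and \<Omega> :: "pt set" and u :: "pt \<Rightarrow> spin" and R :: "pt set" and i j :: pt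
  assumes "eps > 0" and "bounded \<Omega>" and "open \<Omega>"
    and "u \<in> SF eps \<Omega>"
    and "R \<in> regions eps u"
    and "\<exists>F. F \<subseteq> u ` (lattice eps \<inter> R) \<and> card F = 4"
    and "i \<in> lattice eps" and "j \<in> lattice eps"
    and "closed_segment i j \<in> edges eps" and "closed_segment i j \<subseteq> R"
    and "u i \<notin> {u j, - u j}"
  shows "boundary_edge eps u R (closed_segment i j)"
proof -
  obtain S where S: "S \<subseteq> triangles eps" "\<forall>T\<in>S. \<forall>T'\<in>S. tri_connected eps u T T'" and R: "R = \<Union>S"
    using assms(5) unfolding regions_def pw_connected_union_def by blast
  obtain T1 T2 where T12: "edge_triangles eps i j T1 T2"
    using edge_triangles_exist[OF assms(1,7,8) dist_if_edge[OF assms(9)]] .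
  obtain T0 where "T0 \<in> S" "midpoint i j \<in> T0"
    using assms(10) midpoint_in_closed_segment unfolding R by blast
  then obtain T T' where "T \<in> S" and TT': "T' \<in> triangles eps" "T \<noteq> T'" "T \<inter> T' = closed_segment i j"
    using T12 S(1) unfolding edge_triangles_def by (metis Int_commute subsetD)
  have ij: "i \<in> lattice eps \<inter> T \<inter> T'" "j \<in> lattice eps \<inter> T \<inter> T'"
    using TT'(3) assms(7,8) ends_in_segment by blast+
  have "T' \<notin> S"
    using mixed_edge_triangle_not_in_region[OF assms(1,4) S \<open>T \<in> S\<close> TT'(2) ij assms(11)] assms(6)
    unfolding R by blast
  then have "T' \<inter> interior R = {}"
    unfolding R by (rule triangle_Int_interior_Union_empty[OF assms(1) S(1) TT'(1)])
  then show ?thesis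
    unfolding boundary_edge_def
    using closed_segment_in_Cedges[OF assms(9)] assms(11) TT' S(1) \<open>T \<in> S\<close> R by blast
qed

end
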